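(* Let $(\omega,c)\in\mathbb{R}^2$ satisfy: $\omega>c^2/4$, or $\omega=c^2/4$ and $c>0$. Then the function $(\alpha_0,\alpha_1)\ni\eta_3\mapsto\eta_2\in(0,\alpha_0)$, where $\eta_2=\frac{-\eta_3+4c+\sqrt{A(\eta_3)}}{2}$, is strictly decreasing.
   Context: $\alpha_0=\tfrac13(4c+\sqrt{48\omega+4c^2})$, $\alpha_1=4\sqrt\omega+2c$, $A(x)=-3x^2+8cx+64\omega$ (positive on $(\alpha_0,\alpha_1)$). For fixed $\eta_3$, $\eta_2$ is the value satisfying $\eta_2^2+\eta_3^2+\eta_2\eta_3-4c(\eta_2+\eta_3)-16(\omega-c^2/4)=0$ given by the formula above. *)

theory Defs
  imports Complex_Main
begin

definition alpha0 :: "real \<Rightarrow> real \<Rightarrow> real" where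
  "alpha0 \<omega> c = (4 * c + sqrt (48 * \<omega> + 4 * c^2)) / 3"

definition alpha1 :: "real \<Rightarrow> real \<Rightarrow> real" where
  "alpha1 \<omega> c = 4 * sqrt \<omega> + 2 * c"

definition Apoly :: "real \<Rightarrow> real \<Rightarrow> real \<Rightarrow> real" where
  "Apoly \<omega> c x = - 3 * x^2 + 8 * c * x + 64 * \<omega>"

definition eta2 :: "real \<Rightarrow> real \<Rightarrow> real \<Rightarrow> real" where
  "eta2 \<omega> c \<eta>3 = (- \<eta>3 + 4 * c + sqrt (Apoly \<omega> c \<eta>3)) / 2"

end

theory Submission
  imports Defs
begin

(* Since A decreases for x \<ge> 4c/3 and \<alpha>\<^sub>0 \<ge> 4c/3, the map \<eta>\<^sub>3 \<mapsto> \<eta>\<^sub>2 is strictly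
  decreasing there; \<alpha>\<^sub>0 is its fixed point, which gives the upper bound \<eta>\<^sub>2 < \<alpha>\<^sub>0.
  Positivity of \<eta>\<^sub>2 amounts to \<open>(x - 4c)\<^sup>2 < A(x)\<close>, and the difference factors as
  \<open>4(\<alpha>\<^sub>1 - x)(x - 2c + 4\<surd>\<omega>)\<close>, whose roots lie outside \<open>(\<alpha>\<^sub>0, \<alpha>\<^sub>1)\<close>. *)

lemma Apoly_diff:
  "Apoly \<omega> c x - Apoly \<omega> c y = (y - x) * (3 * (x + y) - 8 * c)"
  unfolding Apoly_def by (simp add: algebra_simps power2_eq_square)

lemma eta2_strict_decreasing:
  fixes \<omega> c x y :: real
  assumes "4 * c / 3 \<le> x" "x < y"
  shows "eta2 \<omega> c y < eta2 \<omega> c x"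
proof -
  have "0 \<le> (y - x) * (3 * (x + y) - 8 * c)"
    using assms by (intro mult_nonneg_nonneg) auto
  then have "sqrt (Apoly \<omega> c y) \<le> sqrt (Apoly \<omega> c x)"
    using Apoly_diff [of \<omega> c x y] by simp
  then have "- y + 4 * c + sqrt (Apoly \<omega> c y) < - x + 4 * c + sqrt (Apoly \<omega> c x)"
    using assms(2) by linarith
  then show ?thesis
    unfolding eta2_def by (simp add: divide_strict_right_mono)
qed

lemma vertex_le_alpha0:
  fixes \<omega> c :: real
  assumes "0 \<le> 48 * \<omega> + 4 * c^2"
  shows "4 * c / 3 \<le> alpha0 \<omega> c"
  using assms unfolding alpha0_def by simp

lemma eta2_alpha0:
  fixes \<omega> c :: real
  assumes "0 \<le> 48 * \<omega> + 4 * c^2"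
  shows "eta2 \<omega> c (alpha0 \<omega> c) = alpha0 \<omega> c"
proof -
  define q where "q = sqrt (48 * \<omega> + 4 * c^2)"
  have "q \<ge> 0" and q_sq: "q^2 = 48 * \<omega> + 4 * c^2"
    using assms unfolding q_def by simp_all
  have "Apoly \<omega> c ((4 * c + q) / 3) = q^2"
    using q_sq unfolding Apoly_def by (simp add: field_simps power2_eq_square)
  then have "sqrt (Apoly \<omega> c ((4 * c + q) / 3)) = q"
    using \<open>q \<ge> 0\<close> by simp
  then show ?thesis
    unfolding eta2_def alpha0_def q_def [symmetric] by (simp add: field_simps)
qed

lemma Apoly_minus_square:
  fixes \<omega> c x :: real
  assumes "0 \<le> \<omega>"
  shows "Apoly \<omega> c x - (x - 4 * c)^2 = 4 * (alpha1 \<omega> c - x) * (x - 2 * c + 4 * sqrt \<omega>)"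
proof -
  have "\<omega> = (sqrt \<omega>)^2" using assms by simp
  then show ?thesis
    unfolding Apoly_def alpha1_def by (simp add: algebra_simps power2_eq_square)
qed

lemma eta2_pos:
  fixes \<omega> c x :: real
  assumes "0 \<le> \<omega>" "2 * c - 4 * sqrt \<omega> < x" "x < alpha1 \<omega> c"
  shows "0 < eta2 \<omega> c x"
proof -
  have "0 < 4 * (alpha1 \<omega> c - x) * (x - 2 * c + 4 * sqrt \<omega>)"
    using assms by (intro mult_pos_pos) auto
  then have "sqrt ((x - 4 * c)^2) < sqrt (Apoly \<omega> c x)"
    using Apoly_minus_square [OF assms(1), of c x] by (intro real_sqrt_less_mono) linarith
  then show ?thesis
    unfolding eta2_def by simp
qed

lemma lower_root_le_alpha0:
  fixes \<omega> c :: real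
  assumes "0 \<le> \<omega>"
  shows "2 * c - 4 * sqrt \<omega> \<le> alpha0 \<omega> c"
proof -
  have "sqrt ((2 * c)^2) \<le> sqrt (48 * \<omega> + 4 * c^2)"
    using assms by (simp add: power_mult_distrib)
  then have "2 * c \<le> sqrt (48 * \<omega> + 4 * c^2)"
    by (metis abs_ge_self order.trans real_sqrt_abs)
  moreover have "0 \<le> sqrt \<omega>"
    using assms by simp
  ultimately have "6 * c - 12 * sqrt \<omega> \<le> 4 * c + sqrt (48 * \<omega> + 4 * c^2)"
    by linarith
  then show ?thesis
    unfolding alpha0_def by (simp add: field_simps)
qed

theorem lemma3p3:
  fixes \<omega> c :: real
  assumes "\<omega> > c^2 / 4 \<or> (\<omega> = c^2 / 4 \<and> c > 0)"
  shows "(\<forall>x \<in> {alpha0 \<omega> c <..< alpha1 \<omega> c}. eta2 \<omega> c x \<in> {0 <..< alpha0 \<omega> c})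
       \<and> (\<forall>x \<in> {alpha0 \<omega> c <..< alpha1 \<omega> c}. \<forall>y \<in> {alpha0 \<omega> c <..< alpha1 \<omega> c}.
            x < y \<longrightarrow> eta2 \<omega> c y < eta2 \<omega> c x)"
proof -
  have "0 \<le> \<omega>"
    using assms zero_le_power2 [of c] by linarith
  then have disc: "0 \<le> 48 * \<omega> + 4 * c^2"
    by simp
  have bounds: "0 < eta2 \<omega> c x \<and> eta2 \<omega> c x < alpha0 \<omega> c"
    if "alpha0 \<omega> c < x" "x < alpha1 \<omega> c" for x
  proof
    show "0 < eta2 \<omega> c x"
      using eta2_pos lower_root_le_alpha0 \<open>0 \<le> \<omega>\<close> that by (meson order.strict_trans1)
    show "eta2 \<omega> c x < alpha0 \<omega> c"
      using eta2_strict_decreasing [OF vertex_le_alpha0 [OF disc] that(1), of \<omega>] eta2_alpha0 [OF disc] by simp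
  qed
  have "eta2 \<omega> c y < eta2 \<omega> c x"
    if "alpha0 \<omega> c < x" "x < y" for x y
    using eta2_strict_decreasing [of c x] vertex_le_alpha0 [OF disc] that by simp
  with bounds show ?thesis
    by auto
qed

end
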